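(* Let $(G,c)$ be a metric TSP instance with $n\ge 3$ cities and let $T^*$ be a shortest tour. Then every 2-optimal tour $T'$ satisfies $c(T') \le \sqrt{n/2}\, c(T^* )$.
   Context: A metric TSP instance with $n$ cities consists of a complete undirected graph $G$ on $n$ vertices together with $c: E(G)\to\mathbb{R}_{\ge 0}$ satisfying the triangle inequality $c(x,y)+c(y,z)\ge c(x,z)$. A tour is a cycle containing all vertices; its length is the sum of its edge lengths. Tours are regarded as oriented cycles. A tour is 2-optimal if for all pairs of edges $(a,b),(x,y)$ of the oriented tour, $c(a,x)+c(b,y)\ge c(a,b)+c(x,y)$. *)

theory Defs
  imports Complex_Main
begin

text \<open>A metric TSP instance on the finite city set V: edge lengths c on pairs of
distinct cities, nonnegative, symmetric, satisfying the triangle inequality.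
Values c x x (loops) play no role.\<close>
definition metric_tsp :: "'a set \<Rightarrow> ('a \<Rightarrow> 'a \<Rightarrow> real) \<Rightarrow> bool" where
  "metric_tsp V c \<longleftrightarrow> finite V \<and>
     (\<forall>x\<in>V. \<forall>y\<in>V. x \<noteq> y \<longrightarrow> c x y \<ge> 0 \<and> c x y = c y x) \<and>
     (\<forall>x\<in>V. \<forall>y\<in>V. \<forall>z\<in>V. x \<noteq> y \<and> y \<noteq> z \<and> x \<noteq> z \<longrightarrow> c x y + c y z \<ge> c x z)"

text \<open>An (oriented) tour is a list enumerating all cities exactly once,
read cyclically: T!0, T!1, ..., T!(n-1), T!0.\<close>
definition is_tour :: "'a set \<Rightarrow> 'a list \<Rightarrow> bool" where
  "is_tour V T \<longleftrightarrow> distinct T \<and> set T = V"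

definition tour_length :: "('a \<Rightarrow> 'a \<Rightarrow> real) \<Rightarrow> 'a list \<Rightarrow> real" where
  "tour_length c T = (\<Sum>i<length T. c (T ! i) (T ! ((i + 1) mod length T)))"

definition two_optimal :: "('a \<Rightarrow> 'a \<Rightarrow> real) \<Rightarrow> 'a list \<Rightarrow> bool" where
  "two_optimal c T \<longleftrightarrow>
     (\<forall>i<length T. \<forall>j<length T. i \<noteq> j \<longrightarrow>
        (let a = T ! i; b = T ! ((i + 1) mod length T);
             x = T ! j; y = T ! ((j + 1) mod length T)
         in c a x + c b y \<ge> c a b + c x y))"

end

theory Submission
  imports Defs "HOL-Analysis.Analysis"
begin

text \<open>
Walking around any tour \<open>w\<close> of length \<open>L\<close> places the cities on a circle of circumference \<open>L\<close>
so that, by the triangle inequality, \<open>c\<close> is dominated by the circular distance \<open>d\<close>.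
Let the 2-optimal tour consist of the edges \<open>(a\<^sub>i, b\<^sub>i)\<close> of length \<open>r\<^sub>i\<close>; 2-optimality gives
\<open>r\<^sub>i + r\<^sub>j \<le> d(a\<^sub>i, a\<^sub>j) + d(b\<^sub>i, b\<^sub>j)\<close>. Hence for every point \<open>s\<close> of the circle the arcs of
radius \<open>max 0 (r\<^sub>i - d(s, a\<^sub>i))\<close> around the \<open>b\<^sub>i\<close> are disjoint, so their diameters add up to at
most \<open>L\<close>. Integrating over \<open>s\<close> yields \<open>2 \<Sum> r\<^sub>i\<^sup>2 \<le> L\<^sup>2\<close>, and Cauchy-Schwarz turns this into
\<open>\<Sum> r\<^sub>i \<le> sqrt (n/2) L\<close>.
\<close>

definition circ_dist :: "real \<Rightarrow> real \<Rightarrow> real \<Rightarrow> real" where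
  "circ_dist L x y = min \<bar>x - y\<bar> (L - \<bar>x - y\<bar>)"

lemma circ_dist_commute: "circ_dist L x y = circ_dist L y x"
  unfolding circ_dist_def by (simp add: abs_minus_commute)

lemma circ_dist_le_half: "circ_dist L x y \<le> L / 2"
  unfolding circ_dist_def by (simp add: min_def)

lemma circ_dist_nonneg: "x \<in> {0..L} \<Longrightarrow> y \<in> {0..L} \<Longrightarrow> 0 \<le> circ_dist L x y"
  unfolding circ_dist_def by (simp add: min_def abs_if)

lemma circ_dist_triangle:
  "x \<in> {0..L} \<Longrightarrow> y \<in> {0..L} \<Longrightarrow> z \<in> {0..L} \<Longrightarrow>
   circ_dist L x z \<le> circ_dist L x y + circ_dist L y z"
  unfolding circ_dist_def by (simp add: min_def abs_if split: if_splits)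

section \<open>Disjoint arcs on a circle\<close>

lemma sum_diameters_le_line_span:
  fixes x \<rho> :: "'i \<Rightarrow> real"
  assumes "finite S"
    and "\<And>i j. i \<in> S \<Longrightarrow> j \<in> S \<Longrightarrow> i \<noteq> j \<Longrightarrow> \<rho> i + \<rho> j \<le> \<bar>x i - x j\<bar>"
  shows "S \<noteq> {} \<Longrightarrow> \<exists>i0\<in>S. \<exists>j0\<in>S. (\<forall>k\<in>S. x i0 \<le> x k \<and> x k \<le> x j0) \<and>
           (\<Sum>k\<in>S. 2 * \<rho> k) \<le> x j0 - x i0 + \<rho> i0 + \<rho> j0"
  using assms
proof (induction S rule: finite_ranking_induct[where f = x])
  case empty
  then show ?case by simp
next
  case (insert t S)
  consider "t \<in> S" | "S = {}" | "t \<notin> S" "S \<noteq> {}" by blast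
  then show ?case
  proof cases
    case 1
    then show ?thesis using insert by (simp add: insert_absorb)
  next
    case 2
    then show ?thesis by simp
  next
    case 3
    then obtain i0 j0 where ij: "i0 \<in> S" "j0 \<in> S" "\<forall>k\<in>S. x i0 \<le> x k \<and> x k \<le> x j0"
      "(\<Sum>k\<in>S. 2 * \<rho> k) \<le> x j0 - x i0 + \<rho> i0 + \<rho> j0"
      using insert.IH insert.prems by (metis insertCI)
    have "\<rho> j0 + \<rho> t \<le> \<bar>x j0 - x t\<bar>" "x j0 \<le> x t"
      using insert.prems insert.hyps ij 3 by (metis insertCI)+
    moreover have "(\<Sum>k\<in>insert t S. 2 * \<rho> k) = 2 * \<rho> t + (\<Sum>k\<in>S. 2 * \<rho> k)"
      using 3 insert.hyps by simp
    ultimately have "(\<Sum>k\<in>insert t S. 2 * \<rho> k) \<le> x t - x i0 + \<rho> i0 + \<rho> t"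
      using ij by linarith
    moreover have "\<forall>k\<in>insert t S. x i0 \<le> x k \<and> x k \<le> x t"
      using ij insert.hyps by force
    ultimately show ?thesis using ij by blast
  qed
qed

lemma sum_diameters_le_circumference:
  fixes x \<rho> :: "'i \<Rightarrow> real"
  assumes "finite I" "0 \<le> L" and \<rho>: "\<And>i. i \<in> I \<Longrightarrow> 0 \<le> \<rho> i \<and> 2 * \<rho> i \<le> L"
    and packing: "\<And>i j. i \<in> I \<Longrightarrow> j \<in> I \<Longrightarrow> i \<noteq> j \<Longrightarrow> 0 < \<rho> i \<Longrightarrow> 0 < \<rho> j \<Longrightarrow>
      \<rho> i + \<rho> j \<le> circ_dist L (x i) (x j)"
  shows "(\<Sum>i\<in>I. 2 * \<rho> i) \<le> L"
proof -
  define J where "J = {i\<in>I. 0 < \<rho> i}"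
  have "finite J" using assms(1) by (simp add: J_def)
  have sum_J: "(\<Sum>i\<in>I. 2 * \<rho> i) = (\<Sum>i\<in>J. 2 * \<rho> i)"
    by (rule sum.mono_neutral_right) (use assms(1) in \<open>auto simp: J_def less_le dest: \<rho>\<close>)
  show ?thesis
  proof (cases "J = {}")
    case True
    then show ?thesis using sum_J assms(2) by simp
  next
    case False
    have "\<rho> i + \<rho> j \<le> \<bar>x i - x j\<bar>" if "i \<in> J" "j \<in> J" "i \<noteq> j" for i j
      using packing[of i j] that by (auto simp: J_def circ_dist_def)
    then obtain i0 j0 where ij: "i0 \<in> J" "j0 \<in> J" "\<forall>k\<in>J. x i0 \<le> x k \<and> x k \<le> x j0"
      "(\<Sum>k\<in>J. 2 * \<rho> k) \<le> x j0 - x i0 + \<rho> i0 + \<rho> j0"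
      using sum_diameters_le_line_span[OF \<open>finite J\<close>] False by blast
    show ?thesis
    proof (cases "i0 = j0")
      case True
      then show ?thesis using ij \<rho>[of j0] sum_J by (simp add: J_def)
    next
      case False
      \<comment> \<open>the two extreme arcs are also separated the other way round the circle\<close>
      have "\<rho> i0 + \<rho> j0 \<le> L - \<bar>x i0 - x j0\<bar>"
        using packing[of i0 j0] ij False by (auto simp: J_def circ_dist_def)
      then show ?thesis using ij sum_J by auto
    qed
  qed
qed

section \<open>The circular tent and its integral\<close>

definition ramp_antideriv :: "real \<Rightarrow> real" where
  "ramp_antideriv x = (max 0 x)\<^sup>2 / 2"

lemma has_real_derivative_ramp_antideriv:
  "(ramp_antideriv has_real_derivative max 0 x) (at x)"
proof -
  consider "x > 0" | "x < 0" | "x = 0" by linarith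
  then show ?thesis
  proof cases
    case 1
    have "((\<lambda>y. y\<^sup>2 / 2) has_real_derivative x) (at x)"
      by (auto intro!: derivative_eq_intros)
    then have "(ramp_antideriv has_real_derivative x) (at x)"
      by (rule has_field_derivative_transform_within_open[where S="{0<..}"])
         (use 1 in \<open>auto simp: ramp_antideriv_def\<close>)
    then show ?thesis using 1 by simp
  next
    case 2
    have "((\<lambda>y. 0) has_real_derivative 0) (at x)"
      by simp
    then have "(ramp_antideriv has_real_derivative 0) (at x)"
      by (rule has_field_derivative_transform_within_open[where S="{..<0}"])
         (use 2 in \<open>auto simp: ramp_antideriv_def\<close>)
    then show ?thesis using 2 by simp
  next
    case 3
    have "((\<lambda>y::real. max 0 y / 2) \<longlongrightarrow> 0) (at 0)"
      by (rule tendsto_eq_intros) (auto intro!: tendsto_eq_intros)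
    moreover have "\<forall>\<^sub>F y in at 0. max 0 y / 2 = (ramp_antideriv y - ramp_antideriv 0) / (y - 0)"
      unfolding eventually_at_filter by (auto simp: ramp_antideriv_def max_def power2_eq_square)
    ultimately have "((\<lambda>y. (ramp_antideriv y - ramp_antideriv 0) / (y - 0)) \<longlongrightarrow> 0) (at 0)"
      by (rule tendsto_cong[THEN iffD1, rotated])
    then show ?thesis using 3 by (simp add: has_field_derivative_iff)
  qed
qed

text \<open>The tent \<open>max 0 (r - \<bar>x\<bar>)\<close> is the second difference
  \<open>max 0 (x + r) - 2 max 0 x + max 0 (x - r)\<close> of the ramp, whose antiderivative is \<open>ramp_antideriv\<close>.\<close>
definition tent_antideriv :: "real \<Rightarrow> real \<Rightarrow> real" where
  "tent_antideriv r x = ramp_antideriv (x + r) - 2 * ramp_antideriv x + ramp_antideriv (x - r)"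

lemma has_real_derivative_tent_antideriv:
  assumes "0 \<le> r"
  shows "(tent_antideriv r has_real_derivative max 0 (r - \<bar>x\<bar>)) (at x)"
proof -
  have "(tent_antideriv r has_real_derivative max 0 (x + r) - 2 * max 0 x + max 0 (x - r)) (at x)"
    unfolding tent_antideriv_def
    by (auto intro!: derivative_eq_intros has_real_derivative_ramp_antideriv[THEN DERIV_chain2])
  moreover have "max 0 (x + r) - 2 * max 0 x + max 0 (x - r) = max 0 (r - \<bar>x\<bar>)"
    using assms by (auto simp: max_def abs_if)
  ultimately show ?thesis by simp
qed

lemma tent_antideriv_right: "0 \<le> r \<Longrightarrow> r \<le> x \<Longrightarrow> tent_antideriv r x = r\<^sup>2"
  unfolding tent_antideriv_def ramp_antideriv_def by (simp add: max_def power2_eq_square field_simps)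

lemma tent_antideriv_left: "0 \<le> r \<Longrightarrow> x \<le> -r \<Longrightarrow> tent_antideriv r x = 0"
  unfolding tent_antideriv_def ramp_antideriv_def by (cases "r = 0") (auto simp: max_def)

lemma circ_tent_has_integral:
  assumes "a \<in> {0..L}" "0 \<le> r" "2 * r \<le> L"
  shows "((\<lambda>s. max 0 (r - circ_dist L s a)) has_integral r\<^sup>2) {0..L}"
proof -
  \<comment> \<open>the translates by \<open>\<plusminus>L\<close> make the antiderivative periodic, i.e. the tent circular\<close>
  define F where
    "F s = tent_antideriv r (s - a + L) + tent_antideriv r (s - a) + tent_antideriv r (s - a - L)" for s
  have "(F has_real_derivative max 0 (r - circ_dist L s a)) (at s)" if "s \<in> {0..L}" for s
  proof -
    have "(F has_real_derivative
        max 0 (r - \<bar>s - a + L\<bar>) + max 0 (r - \<bar>s - a\<bar>) + max 0 (r - \<bar>s - a - L\<bar>)) (at s)"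
      unfolding F_def using assms(2)
      by (auto intro!: derivative_eq_intros has_real_derivative_tent_antideriv[THEN DERIV_chain2])
    moreover have "max 0 (r - \<bar>s - a + L\<bar>) + max 0 (r - \<bar>s - a\<bar>) + max 0 (r - \<bar>s - a - L\<bar>)
        = max 0 (r - circ_dist L s a)"
      using assms that by (auto simp: circ_dist_def max_def min_def abs_if)
    ultimately show ?thesis by simp
  qed
  then have "((\<lambda>s. max 0 (r - circ_dist L s a)) has_integral F L - F 0) {0..L}"
    using assms
    by (intro fundamental_theorem_of_calculus)
       (auto simp: has_real_derivative_iff_has_vector_derivative intro: has_vector_derivative_at_within)
  moreover have "F L - F 0 = r\<^sup>2"
    unfolding F_def using assms by (simp add: tent_antideriv_right tent_antideriv_left)
  ultimately show ?thesis by simp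
qed

lemma sum_squares_le_of_pairwise_circ_dist:
  fixes a b r :: "'i \<Rightarrow> real"
  assumes "finite I" "0 \<le> L"
    and a: "\<And>i. i \<in> I \<Longrightarrow> a i \<in> {0..L}"
    and r: "\<And>i. i \<in> I \<Longrightarrow> 0 \<le> r i \<and> 2 * r i \<le> L"
    and pairwise: "\<And>i j. i \<in> I \<Longrightarrow> j \<in> I \<Longrightarrow> i \<noteq> j \<Longrightarrow>
      r i + r j \<le> circ_dist L (a i) (a j) + circ_dist L (b i) (b j)"
  shows "2 * (\<Sum>i\<in>I. (r i)\<^sup>2) \<le> L\<^sup>2"
proof -
  define \<rho> where "\<rho> i s = max 0 (r i - circ_dist L s (a i))" for i s
  have "((\<lambda>s. \<Sum>i\<in>I. 2 * \<rho> i s) has_integral (\<Sum>i\<in>I. 2 * (r i)\<^sup>2)) {0..L}"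
    unfolding \<rho>_def using assms(1) a r
    by (intro has_integral_sum has_integral_mult_right circ_tent_has_integral) auto
  moreover have "((\<lambda>s. L) has_integral L\<^sup>2) {0..L}"
    using has_integral_const_real[of L 0 L] assms(2) by (simp add: power2_eq_square)
  moreover have "(\<Sum>i\<in>I. 2 * \<rho> i s) \<le> L" if s: "s \<in> {0..L}" for s
  proof (rule sum_diameters_le_circumference[where x = b])
    show "0 \<le> \<rho> i s \<and> 2 * \<rho> i s \<le> L" if "i \<in> I" for i
      using circ_dist_nonneg[OF s a[OF that]] r[OF that] assms(2) by (auto simp: \<rho>_def max_def)
    show "\<rho> i s + \<rho> j s \<le> circ_dist L (b i) (b j)"
      if "i \<in> I" "j \<in> I" "i \<noteq> j" "0 < \<rho> i s" "0 < \<rho> j s" for i j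
    proof -
      have "circ_dist L (a i) (a j) \<le> circ_dist L s (a i) + circ_dist L s (a j)"
        using circ_dist_triangle[OF a[OF that(1)] s a[OF that(2)]] by (simp add: circ_dist_commute)
      then show ?thesis
        using pairwise[OF that(1-3)] that(4,5) by (auto simp: \<rho>_def max_def split: if_splits)
    qed
  qed (use assms in auto)
  ultimately have "(\<Sum>i\<in>I. 2 * (r i)\<^sup>2) \<le> L\<^sup>2"
    by (rule has_integral_le)
  then show ?thesis by (simp add: sum_distrib_left)
qed

section \<open>Tours as walks around a circle\<close>

lemma mod_neq_if_diff_less: "(i::nat) < j \<Longrightarrow> j - i < n \<Longrightarrow> i mod n \<noteq> j mod n"
  by (metis dvd_imp_le mod_eq_dvd_iff_nat less_imp_le_nat not_le zero_less_diff)

lemma metric_tsp_commute: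
  "metric_tsp V c \<Longrightarrow> x \<in> V \<Longrightarrow> y \<in> V \<Longrightarrow> x \<noteq> y \<Longrightarrow> c x y = c y x"
  unfolding metric_tsp_def by blast

lemma metric_tsp_nonneg:
  "metric_tsp V c \<Longrightarrow> x \<in> V \<Longrightarrow> y \<in> V \<Longrightarrow> x \<noteq> y \<Longrightarrow> 0 \<le> c x y"
  unfolding metric_tsp_def by blast

lemma metric_tsp_triangle:
  "metric_tsp V c \<Longrightarrow> x \<in> V \<Longrightarrow> y \<in> V \<Longrightarrow> z \<in> V \<Longrightarrow> x \<noteq> y \<Longrightarrow> y \<noteq> z \<Longrightarrow> x \<noteq> z \<Longrightarrow>
   c x z \<le> c x y + c y z"
  unfolding metric_tsp_def by blast

definition tour_edge :: "('a \<Rightarrow> 'a \<Rightarrow> real) \<Rightarrow> 'a list \<Rightarrow> nat \<Rightarrow> real" where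
  "tour_edge c T i = c (T ! i) (T ! (Suc i mod length T))"

definition tour_prefix :: "('a \<Rightarrow> 'a \<Rightarrow> real) \<Rightarrow> 'a list \<Rightarrow> nat \<Rightarrow> real" where
  "tour_prefix c T k = (\<Sum>m<k. tour_edge c T (m mod length T))"

lemma tour_prefix_0 [simp]: "tour_prefix c T 0 = 0"
  by (simp add: tour_prefix_def)

lemma tour_length_eq_sum_tour_edge: "tour_length c T = (\<Sum>i<length T. tour_edge c T i)"
  unfolding tour_length_def tour_edge_def by simp

lemma tour_prefix_length: "tour_prefix c T (length T) = tour_length c T"
  unfolding tour_prefix_def tour_length_eq_sum_tour_edge by simp

lemma tour_edge_mod:
  "tour_edge c T (k mod length T) = c (T ! (k mod length T)) (T ! (Suc k mod length T))"
  by (simp add: tour_edge_def mod_Suc_eq)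

lemma tour_prefix_Suc: "tour_prefix c T (Suc k) = tour_prefix c T k + tour_edge c T (k mod length T)"
  by (simp add: tour_prefix_def)

lemma tour_prefix_length_add: "tour_prefix c T (length T + k) = tour_length c T + tour_prefix c T k"
proof (induction k)
  case 0
  then show ?case by (simp add: tour_prefix_length)
next
  case (Suc k)
  have "Suc (length T + k) mod length T = Suc k mod length T"
    by (metis add_Suc_right mod_add_self1)
  with Suc show ?case by (simp add: tour_prefix_Suc tour_edge_mod)
qed

lemma length_tour: "is_tour V T \<Longrightarrow> length T = card V"
  by (metis distinct_card is_tour_def)

lemma tour_nth_in: "is_tour V T \<Longrightarrow> i < length T \<Longrightarrow> T ! i \<in> V"
  by (auto simp: is_tour_def)

lemma tour_nth_neq:
  "is_tour V T \<Longrightarrow> i < length T \<Longrightarrow> j < length T \<Longrightarrow> i \<noteq> j \<Longrightarrow> T ! i \<noteq> T ! j"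
  by (simp add: is_tour_def nth_eq_iff_index_eq)

context
  fixes V :: "'a set" and c :: "'a \<Rightarrow> 'a \<Rightarrow> real" and w :: "'a list"
  assumes metric: "metric_tsp V c" and tour: "is_tour V w" and two_le_length: "2 \<le> length w"
begin

lemma tour_nonempty: "w \<noteq> []"
  using two_le_length by (cases w) auto

lemma tour_edge_nonneg: "i < length w \<Longrightarrow> 0 \<le> tour_edge c w i"
  unfolding tour_edge_def
  using tour_nonempty two_le_length mod_neq_if_diff_less[of i "Suc i" "length w"]
  by (intro metric_tsp_nonneg[OF metric] tour_nth_in[OF tour] tour_nth_neq[OF tour]) auto

lemma tour_prefix_mono: "k \<le> l \<Longrightarrow> tour_prefix c w k \<le> tour_prefix c w l"
proof (induction l)
  case (Suc l)
  then show ?case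
    using tour_edge_nonneg[of "l mod length w"] tour_nonempty
    by (cases "k = Suc l") (auto simp: tour_prefix_Suc)
qed simp

lemma tour_prefix_in_range: "k \<le> length w \<Longrightarrow> tour_prefix c w k \<in> {0..tour_length c w}"
  using tour_prefix_mono[of 0 k] tour_prefix_mono[of k "length w"]
  by (simp add: tour_prefix_length)

lemma tour_length_nonneg: "0 \<le> tour_length c w"
  using tour_prefix_in_range[of "length w"] by (simp add: tour_prefix_length)

lemma dist_le_tour_prefix_diff:
  "i < j \<Longrightarrow> j - i < length w \<Longrightarrow>
   c (w ! (i mod length w)) (w ! (j mod length w)) \<le> tour_prefix c w j - tour_prefix c w i"
proof (induction j)
  case (Suc j)
  show ?case
  proof (cases "j = i")
    case True
    then show ?thesis by (simp add: tour_prefix_Suc tour_edge_mod)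
  next
    case False
    let ?v = "\<lambda>k. w ! (k mod length w)"
    have ij: "i < j" "j - i < length w" using Suc.prems False by auto
    have "i mod length w \<noteq> j mod length w" "j mod length w \<noteq> Suc j mod length w"
         "i mod length w \<noteq> Suc j mod length w"
      using mod_neq_if_diff_less ij Suc.prems by auto
    then have "?v i \<noteq> ?v j" "?v j \<noteq> ?v (Suc j)" "?v i \<noteq> ?v (Suc j)"
      using tour_nonempty by (simp_all add: tour_nth_neq[OF tour])
    moreover have "?v k \<in> V" for k
      using tour_nonempty by (simp add: tour_nth_in[OF tour])
    ultimately have "c (?v i) (?v (Suc j)) \<le> c (?v i) (?v j) + c (?v j) (?v (Suc j))"
      by (intro metric_tsp_triangle[OF metric])
    also have "\<dots> \<le> tour_prefix c w (Suc j) - tour_prefix c w i"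
      using Suc.IH ij by (simp add: tour_prefix_Suc tour_edge_mod)
    finally show ?thesis .
  qed
qed simp

lemma dist_le_circ_dist_tour_prefix:
  assumes "p < length w" "q < length w" "p \<noteq> q"
  shows "c (w ! p) (w ! q) \<le> circ_dist (tour_length c w) (tour_prefix c w p) (tour_prefix c w q)"
proof -
  let ?L = "tour_length c w" and ?P = "tour_prefix c w"
  have ordered: "c (w ! p) (w ! q) \<le> circ_dist ?L (?P p) (?P q)"
    if "p < q" "q < length w" for p q
  proof -
    have comm: "c (w ! q) (w ! p) = c (w ! p) (w ! q)"
      using that by (intro metric_tsp_commute[OF metric] tour_nth_in[OF tour] tour_nth_neq[OF tour]) auto
    have "c (w ! p) (w ! q) \<le> ?P q - ?P p"
      using dist_le_tour_prefix_diff[of p q] that by simp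
    \<comment> \<open>the other way round the tour, from q through the closing edge back to p\<close>
    moreover have "c (w ! q) (w ! p) \<le> ?P (length w + p) - ?P q"
      using dist_le_tour_prefix_diff[of q "length w + p"] that by simp
    then have "c (w ! p) (w ! q) \<le> ?L - (?P q - ?P p)"
      using comm by (simp add: tour_prefix_length_add)
    moreover have "?P p \<le> ?P q" using that by (simp add: tour_prefix_mono)
    ultimately show ?thesis by (simp add: circ_dist_def)
  qed
  show ?thesis
  proof (cases "p < q")
    case True
    then show ?thesis using ordered assms by simp
  next
    case False
    then have "c (w ! q) (w ! p) \<le> circ_dist ?L (?P q) (?P p)"
      using ordered assms by simp
    then show ?thesis
      using assms
      by (simp add: circ_dist_commute metric_tsp_commute[OF metric] tour_nth_in[OF tour]
          tour_nth_neq[OF tour])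
  qed
qed

lemma tour_embeds_in_circle:
  obtains pos where "\<And>u. u \<in> V \<Longrightarrow> pos u \<in> {0..tour_length c w}"
    and "\<And>u u'. u \<in> V \<Longrightarrow> u' \<in> V \<Longrightarrow> u \<noteq> u' \<Longrightarrow>
      c u u' \<le> circ_dist (tour_length c w) (pos u) (pos u')"
proof -
  have "\<forall>u\<in>V. \<exists>p. p < length w \<and> w ! p = u"
    using tour by (auto simp: is_tour_def in_set_conv_nth)
  then obtain idx where idx: "\<And>u. u \<in> V \<Longrightarrow> idx u < length w \<and> w ! idx u = u"
    by metis
  show thesis
  proof (rule that[of "\<lambda>u. tour_prefix c w (idx u)"])
    show "tour_prefix c w (idx u) \<in> {0..tour_length c w}" if "u \<in> V" for u
      using idx[OF that] by (intro tour_prefix_in_range) simp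
    show "c u u' \<le> circ_dist (tour_length c w) (tour_prefix c w (idx u)) (tour_prefix c w (idx u'))"
      if "u \<in> V" "u' \<in> V" "u \<noteq> u'" for u u'
      using dist_le_circ_dist_tour_prefix[of "idx u" "idx u'"] idx[OF that(1)] idx[OF that(2)] that(3)
      by metis
  qed
qed

end

lemma two_optimal_sum_squares_le:
  assumes metric: "metric_tsp V c" and "card V \<ge> 2"
    and tour: "is_tour V T" and two_opt: "two_optimal c T" and other_tour: "is_tour V w"
  shows "2 * (\<Sum>i<length T. (tour_edge c T i)\<^sup>2) \<le> (tour_length c w)\<^sup>2"
proof -
  let ?n = "length T" and ?L = "tour_length c w"
  have "2 \<le> ?n" "2 \<le> length w"
    using assms(2) length_tour[OF tour] length_tour[OF other_tour] by auto
  obtain pos where pos: "\<And>u. u \<in> V \<Longrightarrow> pos u \<in> {0..?L}"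
    and pos_dist: "\<And>u u'. u \<in> V \<Longrightarrow> u' \<in> V \<Longrightarrow> u \<noteq> u' \<Longrightarrow>
      c u u' \<le> circ_dist ?L (pos u) (pos u')"
    using tour_embeds_in_circle[OF metric other_tour \<open>2 \<le> length w\<close>] by blast
  let ?succ = "\<lambda>i. Suc i mod ?n"
  have succ_less: "?succ i < ?n" if "i < ?n" for i
    using that by (cases ?n) auto
  have in_V: "T ! i \<in> V" "T ! ?succ i \<in> V" if "i < ?n" for i
    using that succ_less by (auto intro!: tour_nth_in[OF tour])
  have nth_neq: "T ! i \<noteq> T ! j" if "i < ?n" "j < ?n" "i \<noteq> j" for i j
    using that tour_nth_neq[OF tour] by blast
  have succ_neq: "?succ i \<noteq> ?succ j" if "i < ?n" "j < ?n" "i \<noteq> j" for i j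
    using that by (auto simp: mod_Suc split: if_splits)
  have edge_le: "tour_edge c T i \<le> circ_dist ?L (pos (T ! i)) (pos (T ! ?succ i))" if "i < ?n" for i
    unfolding tour_edge_def using that succ_less \<open>2 \<le> ?n\<close> mod_neq_if_diff_less[of i "Suc i" ?n]
    by (intro pos_dist in_V nth_neq) auto
  show ?thesis
  proof (rule sum_squares_le_of_pairwise_circ_dist
      [where a = "\<lambda>i. pos (T ! i)" and b = "\<lambda>i. pos (T ! ?succ i)"])
    show "0 \<le> ?L" using tour_length_nonneg[OF metric other_tour \<open>2 \<le> length w\<close>] .
    show "pos (T ! i) \<in> {0..?L}" if "i \<in> {..<?n}" for i
      using that pos in_V by simp
    show "0 \<le> tour_edge c T i \<and> 2 * tour_edge c T i \<le> ?L" if "i \<in> {..<?n}" for i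
      using tour_edge_nonneg[OF metric tour \<open>2 \<le> ?n\<close>, of i] edge_le[of i]
        circ_dist_le_half[of ?L "pos (T ! i)" "pos (T ! ?succ i)"] that
      by simp
    show "tour_edge c T i + tour_edge c T j \<le>
        circ_dist ?L (pos (T ! i)) (pos (T ! j)) + circ_dist ?L (pos (T ! ?succ i)) (pos (T ! ?succ j))"
      if "i \<in> {..<?n}" "j \<in> {..<?n}" "i \<noteq> j" for i j
    proof -
      have "tour_edge c T i + tour_edge c T j \<le>
          c (T ! i) (T ! j) + c (T ! ?succ i) (T ! ?succ j)"
        using two_opt that unfolding two_optimal_def tour_edge_def Let_def by auto
      moreover have "c (T ! i) (T ! j) \<le> circ_dist ?L (pos (T ! i)) (pos (T ! j))"
        using that by (simp add: pos_dist in_V nth_neq)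
      moreover have "c (T ! ?succ i) (T ! ?succ j) \<le>
          circ_dist ?L (pos (T ! ?succ i)) (pos (T ! ?succ j))"
        using that by (simp add: pos_dist in_V nth_neq succ_neq succ_less)
      ultimately show ?thesis by linarith
    qed
  qed simp
qed

theorem mainTheorem3:
  fixes V :: "'a set" and c :: "'a \<Rightarrow> 'a \<Rightarrow> real" and Topt T' :: "'a list"
  assumes "metric_tsp V c"
    and "card V \<ge> 3"
    and "is_tour V Topt"
    and "\<forall>T. is_tour V T \<longrightarrow> tour_length c Topt \<le> tour_length c T"
    and "is_tour V T'"
    and "two_optimal c T'"
  shows "tour_length c T' \<le> sqrt (real (card V) / 2) * tour_length c Topt"
proof -
  let ?n = "card V" and ?L = "tour_length c Topt" and ?r = "tour_edge c T'"
  have "length T' = ?n" using assms(5) by (rule length_tour)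
  then have "(tour_length c T')\<^sup>2 = (\<Sum>i<?n. ?r i * 1)\<^sup>2"
    by (simp add: tour_length_eq_sum_tour_edge)
  also have "\<dots> \<le> (\<Sum>i<?n. (?r i)\<^sup>2) * ?n"
    using Cauchy_Schwarz_ineq_sum[of ?r "\<lambda>_. 1" "{..<?n}"] by simp
  also have "\<dots> \<le> ?L\<^sup>2 / 2 * ?n"
    using two_optimal_sum_squares_le[OF assms(1) _ assms(5,6,3)] assms(2) \<open>length T' = ?n\<close>
    by (intro mult_right_mono) auto
  finally have "tour_length c T' \<le> sqrt (?n / 2 * ?L\<^sup>2)"
    by (intro real_le_rsqrt) (simp add: mult.commute)
  also have "\<dots> = sqrt (?n / 2) * sqrt (?L\<^sup>2)"
    by (rule real_sqrt_mult)
  also have "\<dots> = sqrt (?n / 2) * ?L"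
    using tour_length_nonneg[OF assms(1,3)] assms(2) length_tour[OF assms(3)] by simp
  finally show ?thesis .
qed

end
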